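(* Let $K$ be a field with $\operatorname{char}(K)=0$ and $a\in K$, $a\neq 0$. If $n\geq 4$, there exist two distinct critical points of $D_n(x,a)$ with equal critical values. If $n\geq 6$, there exist three distinct critical points of $D_n(x,a)$ with equal critical values.
   Context: The $n$-th Dickson polynomial with parameter $a$ is $D_n(x,a)=\sum_{j=0}^{\lfloor n/2\rfloor}\frac{n}{n-j}\binom{n-j}{j}(-a)^jx^{n-2j}$. Critical points are the roots of the derivative (in $\overline{K}$), critical values are the values of the polynomial at them. *)

theory Defs
  imports "HOL-Algebra.Algebraic_Closure_Type" "HOL-Computational_Algebra.Polynomial"
begin

definition dickson :: "nat \<Rightarrow> 'a::field \<Rightarrow> 'a poly" where
  "dickson n a = (\<Sum>j\<le>n div 2.
      monom (of_nat n / of_nat (n - j) * of_nat ((n - j) choose j) * (-a) ^ j) (n - 2 * j))"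

definition critical_point :: "'a::field poly \<Rightarrow> 'a alg_closure \<Rightarrow> bool" where
  "critical_point p z \<longleftrightarrow> poly (pderiv (map_poly to_ac p)) z = 0"

definition critical_value :: "'a::field poly \<Rightarrow> 'a alg_closure \<Rightarrow> 'a alg_closure" where
  "critical_value p z = poly (map_poly to_ac p) z"

end

theory Submission
  imports Defs
begin

(* Write D = D_n(x,a). Comparing coefficients shows (x^2 - 4a) D'' + x D' = n^2 D, so the
   derivative of n^2 D^2 - (x^2 - 4a) D'^2 vanishes and this polynomial is the constant
   4 n^2 a^n (its value at 0). Hence every critical value c satisfies c^2 = 4 a^n: there are
   at most two critical values. A common root of D' and D'' would be a root of D by the
   differential equation, contradicting D^2 = 4 a^n \<noteq> 0 there; so D' has n - 1 distinct
   roots over the algebraic closure, and one of the two values is taken at least (n - 1)/2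
   times: twice once n \<ge> 4, three times once n \<ge> 6. *)

definition dickson_coeff :: "nat \<Rightarrow> 'a::field \<Rightarrow> nat \<Rightarrow> 'a" where
  "dickson_coeff n a j = of_nat n / of_nat (n - j) * of_nat ((n - j) choose j) * (-a) ^ j"

lemma coeff_dickson:
  "coeff (dickson n a) k = (if k \<le> n \<and> even (n - k) then dickson_coeff n a ((n - k) div 2) else 0)"
proof -
  have sum: "coeff (dickson n a) k = (\<Sum>j\<le>n div 2. if n - 2 * j = k then dickson_coeff n a j else 0)"
    by (simp only: dickson_def coeff_sum coeff_monom dickson_coeff_def)
  show ?thesis
  proof (cases "k \<le> n \<and> even (n - k)")
    case True
    then obtain i where i: "n - k = 2 * i" by (blast elim: evenE)
    have "n - 2 * j = k \<longleftrightarrow> j = i" if "j \<le> n div 2" for j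
      using that i True by auto
    hence "coeff (dickson n a) k = (\<Sum>j\<le>n div 2. if j = i then dickson_coeff n a j else 0)"
      unfolding sum by (intro sum.cong) auto
    also have "\<dots> = dickson_coeff n a i"
      using i True by (simp add: sum.delta)
    finally show ?thesis using True i by simp
  next
    case False
    hence "n - 2 * j \<noteq> k" if "j \<le> n div 2" for j
      using that by auto
    thus ?thesis unfolding sum if_not_P[OF False] by (intro sum.neutral) auto
  qed
qed

(* For n = 0 the defining sum is 0/0 * ... = 0, whence the hypotheses n \<ge> 1 below. *)
lemma degree_dickson:
  fixes a :: "'a::field_char_0"
  assumes "n \<ge> 1"
  shows "degree (dickson n a) = n"
proof (rule order.antisym)
  show "degree (dickson n a) \<le> n" by (rule degree_le) (simp add: coeff_dickson)
  have "coeff (dickson n a) n = 1" using assms by (simp add: coeff_dickson dickson_coeff_def)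
  thus "n \<le> degree (dickson n a)" by (intro le_degree) simp
qed

lemma map_poly_to_ac_dickson:
  fixes a :: "'a::field"
  shows "map_poly to_ac (dickson n a) = dickson n (to_ac a)"
proof -
  have "to_ac (dickson_coeff n a j) = dickson_coeff n (to_ac a) j" for j
    by (simp add: dickson_coeff_def)
  thus ?thesis
    by (intro poly_eqI)
      (simp only: coeff_map_poly[of to_ac, OF to_ac_0] coeff_dickson if_distrib[of to_ac] to_ac_0)
qed

lemma binomial_two_step:
  "(i + 1) * ((k + i + 1) choose (i + 1)) * (k + i + 2) = (k + 1) * (k + 2) * ((k + i + 2) choose i)"
proof -
  have "(i + 1) * ((k + i + 1) choose (i + 1)) = (k + 1) * ((k + i + 1) choose i)"
    using Suc_times_binomial_add[of i k] by (simp add: add.commute)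
  moreover have "((k + i + 1) choose i) * (k + i + 2) = (k + 2) * ((k + i + 2) choose i)"
    using binomial_absorb_comp[of "k + i + 2" i] by simp
  ultimately show ?thesis by (metis mult.assoc mult.commute)
qed

lemma dickson_coeff_recurrence:
  fixes a :: "'a::field_char_0"
  assumes n: "n = k + 2 * i + 2"
  shows "(of_nat (k^2) - of_nat (n^2)) * dickson_coeff n a (i + 1)
           = 4 * a * of_nat ((k + 1) * (k + 2)) * dickson_coeff n a i"
proof -
  define c1 c2 where "c1 = (of_nat ((k + i + 1) choose (i + 1)) :: 'a)"
    and "c2 = (of_nat ((k + i + 2) choose i) :: 'a)"
  have "n - (i + 1) = k + i + 1" "n - i = k + i + 2" using n by simp_all
  hence dc: "dickson_coeff n a (i + 1) = of_nat n / of_nat (k + i + 1) * c1 * (-a) ^ (i + 1)"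
            "dickson_coeff n a i = of_nat n / of_nat (k + i + 2) * c2 * (-a) ^ i"
    unfolding dickson_coeff_def c1_def c2_def by simp_all
  have "of_nat (i + 1) * c1 * of_nat (k + i + 2) = of_nat ((k + 1) * (k + 2)) * c2"
  proof -
    have "of_nat ((i + 1) * ((k + i + 1) choose (i + 1)) * (k + i + 2))
        = (of_nat ((k + 1) * (k + 2) * ((k + i + 2) choose i)) :: 'a)"
      by (simp only: binomial_two_step)
    thus ?thesis unfolding c1_def c2_def of_nat_mult .
  qed
  hence c1: "of_nat (i + 1) * c1 = of_nat ((k + 1) * (k + 2)) * c2 / of_nat (k + i + 2)"
    by (rule eq_divide_imp[rotated]) (metis of_nat_eq_0_iff add_is_0 zero_neq_numeral)
  have sq: "(of_nat (k^2) - of_nat (n^2) :: 'a) = - 4 * of_nat (i + 1) * of_nat (k + i + 1)"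
    unfolding n by (simp add: algebra_simps power2_eq_square)
  have "(of_nat (k^2) - of_nat (n^2)) * dickson_coeff n a (i + 1)
      = 4 * a * of_nat n * (-a) ^ i * (of_nat (i + 1) * c1)"
    unfolding sq dc by (simp add: field_simps del: of_nat_add of_nat_Suc)
  also have "\<dots> = 4 * a * of_nat ((k + 1) * (k + 2)) * dickson_coeff n a i"
    unfolding c1 dc by (simp add: field_simps del: of_nat_add of_nat_Suc of_nat_mult)
  finally show ?thesis .
qed

lemma coeff_dickson_recurrence:
  fixes a :: "'a::field_char_0"
  shows "(of_nat (k^2) - of_nat (n^2)) * coeff (dickson n a) k
           = 4 * a * of_nat ((k + 1) * (k + 2)) * coeff (dickson n a) (k + 2)"
proof (cases "k + 2 \<le> n \<and> even (n - k)")
  case True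
  then obtain m where "n - k = 2 * m" by (blast elim: evenE)
  with True obtain i where i: "n = k + 2 * i + 2" by (intro that[of "m - 1"]) linarith
  hence "coeff (dickson n a) k = dickson_coeff n a (i + 1)"
    and "coeff (dickson n a) (k + 2) = dickson_coeff n a i"
    by (simp_all add: coeff_dickson)
  thus ?thesis using dickson_coeff_recurrence[OF i] by simp
next
  case False
  hence "coeff (dickson n a) (k + 2) = 0" by (auto simp: coeff_dickson)
  moreover have "k = n \<or> coeff (dickson n a) k = 0" using False by (auto simp: coeff_dickson; presburger)
  ultimately show ?thesis by auto
qed

lemma dickson_ode:
  fixes a :: "'a::field_char_0" and n :: nat
  defines "D \<equiv> dickson n a"
  shows "[:-4 * a, 0, 1:] * pderiv (pderiv D) + [:0, 1:] * pderiv D = [:of_nat (n^2):] * D"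
proof (rule poly_eqI)
  fix k
  have rec: "of_nat (k^2) * coeff D k - of_nat (n^2) * coeff D k
        = 4 * a * of_nat ((k + 1) * (k + 2)) * coeff D (k + 2)"
    using coeff_dickson_recurrence[of k n a] unfolding D_def by (simp add: algebra_simps)
  have lift: "[:-4 * a, 0, 1:] * q = smult (-4 * a) q + pCons 0 (pCons 0 q)" for q :: "'a poly"
    by (simp add: algebra_simps)
  consider "k = 0" | "k = 1" | j where "k = j + 2"
    by (metis add_2_eq_Suc' not0_implies_Suc One_nat_def)
  thus "coeff ([:-4 * a, 0, 1:] * pderiv (pderiv D) + [:0, 1:] * pderiv D) k
      = coeff ([:of_nat (n^2):] * D) k"
    using rec by cases (auto simp: lift coeff_pderiv algebra_simps power2_eq_square minus_equation_iff)
qed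

lemma dickson_low_coeffs:
  fixes a :: "'a::field_char_0"
  assumes "n \<ge> 1"
  shows "of_nat (n^2) * coeff (dickson n a) 0 ^ 2 + 4 * a * coeff (dickson n a) 1 ^ 2
           = 4 * of_nat (n^2) * a ^ n"
proof (cases "even n")
  case True
  then obtain j where j: "n = 2 * j" by (rule evenE)
  with assms have "coeff (dickson n a) 0 = 2 * (-a) ^ j" "coeff (dickson n a) 1 = 0"
    by (auto simp: coeff_dickson dickson_coeff_def)
  thus ?thesis by (simp add: j power_mult_distrib power_mult[symmetric] algebra_simps)
next
  case False
  then obtain j where j: "n = 2 * j + 1" by (rule oddE)
  have "(1 + of_nat j :: 'a) \<noteq> 0" by (metis of_nat_Suc of_nat_neq_0 add.commute)
  with j have c0: "coeff (dickson n a) 0 = 0" and c1: "coeff (dickson n a) 1 = of_nat n * (-a) ^ j"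
    by (auto simp: coeff_dickson dickson_coeff_def)
  have sq: "((-a) ^ j) ^ 2 = a ^ (2 * j)"
    by (simp add: power_mult[symmetric] mult.commute)
  have "of_nat (n^2) * 0 ^ 2 + 4 * a * (of_nat n * (-a) ^ j) ^ 2 = 4 * of_nat (n^2) * (a * ((-a) ^ j) ^ 2)"
    by (simp add: power_mult_distrib)
  also have "\<dots> = 4 * of_nat (n^2) * a ^ n" unfolding sq j by simp
  finally show ?thesis unfolding c0 c1 .
qed

lemma dickson_first_integral:
  fixes a :: "'a::field_char_0"
  assumes "n \<ge> 1"
  defines "D \<equiv> dickson n a"
  shows "[:of_nat (n^2):] * D^2 - [:-4 * a, 0, 1:] * (pderiv D)^2 = [:4 * of_nat (n^2) * a ^ n:]"
proof -
  define Q where "Q = [:of_nat (n^2):] * D^2 - [:-4 * a, 0, 1:] * (pderiv D)^2"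
  have "pderiv Q = [:2:] * pderiv D * ([:of_nat (n^2):] * D
                     - ([:-4 * a, 0, 1:] * pderiv (pderiv D) + [:0, 1:] * pderiv D))"
    unfolding Q_def power2_eq_square
    by (simp add: pderiv_mult pderiv_diff pderiv_add pderiv_smult pderiv_pCons numeral_poly algebra_simps)
  also have "\<dots> = 0" unfolding D_def dickson_ode by simp
  finally obtain c where c: "Q = [:c:]" using pderiv_iszero by blast
  have "c = poly Q 0" using c by simp
  also have "\<dots> = of_nat (n^2) * coeff D 0 ^ 2 + 4 * a * coeff D 1 ^ 2"
  proof -
    have "poly D 0 = coeff D 0" "poly (pderiv D) 0 = coeff D 1"
      by (simp_all add: poly_0_coeff_0 coeff_pderiv)
    thus ?thesis by (simp add: Q_def)
  qed
  also have "\<dots> = 4 * of_nat (n^2) * a ^ n" unfolding D_def using assms(1) by (rule dickson_low_coeffs)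
  finally show ?thesis using c Q_def by simp
qed

lemma dickson_critical_value_square:
  fixes a :: "'a::field_char_0"
  assumes "n \<ge> 1" and "poly (pderiv (dickson n a)) z = 0"
  shows "poly (dickson n a) z ^ 2 = 4 * a ^ n"
proof -
  have "of_nat (n^2) * poly (dickson n a) z ^ 2 = of_nat (n^2) * (4 * a ^ n)"
    using arg_cong[OF dickson_first_integral[OF assms(1), where a = a], of "\<lambda>p. poly p z"] assms(2)
    by (simp add: algebra_simps)
  thus ?thesis using assms(1) by simp
qed

lemma rsquarefree_pderiv_dickson:
  fixes a :: "'a::field_char_0"
  assumes "a \<noteq> 0" and "n \<ge> 1"
  shows "rsquarefree (pderiv (dickson n a))"
  unfolding rsquarefree_roots
proof (intro allI notI)
  fix z
  assume z: "poly (pderiv (dickson n a)) z = 0 \<and> poly (pderiv (pderiv (dickson n a))) z = 0"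
  have "of_nat (n^2) * poly (dickson n a) z = 0"
    using arg_cong[OF dickson_ode[of a n], of "\<lambda>p. poly p z"] z by simp
  hence "poly (dickson n a) z ^ 2 = 0" using assms(2) by simp
  with dickson_critical_value_square[OF assms(2), where a = a] z assms(1) show False by simp
qed

lemma card_roots_rsquarefree:
  fixes p :: "'a::alg_closed_field poly"
  assumes "rsquarefree p"
  shows "card {z. poly p z = 0} = degree p"
proof -
  have p: "p \<noteq> 0" using assms by (simp add: rsquarefree_def)
  then obtain A where A: "size A = degree p" "p = smult (lead_coeff p) (\<Prod>x\<in>#A. [:-x, 1:])"
    using alg_closed_imp_factorization by blast
  have "proots (\<Prod>x\<in>#A. [:-x, 1:]) = A"
  proof (induction A)
    case (add x A)
    have "(\<Prod>y\<in>#A. [:-y, 1:]) \<noteq> 0" by auto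
    thus ?case using add.IH by (simp add: proots_mult del: mult_pCons_left)
  qed simp
  hence "proots p = A" by (subst A(2)) (simp add: p)
  moreover have "proots p = mset_set {z. poly p z = 0}"
    using assms p poly_roots_finite[OF p]
    by (intro multiset_eqI) (simp add: count_mset_set' rsquarefree_root_order order_0I)
  ultimately show ?thesis using A(1) by (metis size_mset_set)
qed

lemma card_dickson_critical_points:
  fixes a :: "'a::{field_char_0, alg_closed_field}"
  assumes "a \<noteq> 0" and "n \<ge> 1"
  shows "card {z. poly (pderiv (dickson n a)) z = 0} = n - 1"
  using card_roots_rsquarefree[OF rsquarefree_pderiv_dickson[OF assms]]
  by (simp add: degree_pderiv degree_dickson[OF assms(2)])

lemma large_fibre_if_square_constant:
  fixes f :: "'b \<Rightarrow> 'a::idom"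
  assumes "finite S" and "\<And>z. z \<in> S \<Longrightarrow> f z ^ 2 = c"
  obtains w where "card S \<le> 2 * card {z \<in> S. f z = w}"
proof (cases "S = {}")
  case False
  then obtain z0 where "z0 \<in> S" by blast
  hence "f z = f z0 \<or> f z = - f z0" if "z \<in> S" for z
    using assms(2) that by (metis power2_eq_iff)
  hence "S = {z \<in> S. f z = f z0} \<union> {z \<in> S. f z = - f z0}" by blast
  hence "card S \<le> card {z \<in> S. f z = f z0} + card {z \<in> S. f z = - f z0}"
    by (metis card_Un_le)
  thus thesis using that[of "f z0"] that[of "- f z0"] by linarith
qed (use that in simp)

lemma dickson_large_critical_fibre:
  fixes a :: "'a::{field_char_0, alg_closed_field}"
  assumes "a \<noteq> 0" and "n \<ge> 2"
  obtains w where "n - 1 \<le> 2 * card {z. poly (pderiv (dickson n a)) z = 0 \<and> poly (dickson n a) z = w}"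
proof -
  define S where "S = {z. poly (pderiv (dickson n a)) z = 0}"
  have card: "card S = n - 1"
    unfolding S_def using assms by (intro card_dickson_critical_points) simp_all
  have "finite S" using card assms by (intro card_ge_0_finite) simp
  moreover have "poly (dickson n a) z ^ 2 = 4 * a ^ n" if "z \<in> S" for z
    using that assms unfolding S_def by (intro dickson_critical_value_square) simp_all
  ultimately obtain w where "card S \<le> 2 * card {z \<in> S. poly (dickson n a) z = w}"
    by (rule large_fibre_if_square_constant)
  thus thesis using that card unfolding S_def by simp
qed

lemma obtain_two_distinct:
  assumes "2 \<le> card A"
  obtains x y where "x \<in> A" "y \<in> A" "x \<noteq> y"
proof -
  obtain B where "B \<subseteq> A" "card B = 2" using assms obtain_subset_with_card_n by metis
  thus thesis using that by (auto simp: card_2_iff)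
qed

lemma obtain_three_distinct:
  assumes "3 \<le> card A"
  obtains x y z where "x \<in> A" "y \<in> A" "z \<in> A" "x \<noteq> y" "x \<noteq> z" "y \<noteq> z"
proof -
  obtain B where "B \<subseteq> A" "card B = 3" using assms obtain_subset_with_card_n by metis
  thus thesis using that by (auto simp: card_3_iff)
qed

theorem corollary2p2:
  fixes a :: "'a::field_char_0" and n :: nat
  assumes "a \<noteq> 0"
  shows "(n \<ge> 4 \<longrightarrow> (\<exists>x y. x \<noteq> y \<and> critical_point (dickson n a) x \<and> critical_point (dickson n a) y
            \<and> critical_value (dickson n a) x = critical_value (dickson n a) y))
       \<and> (n \<ge> 6 \<longrightarrow> (\<exists>x y z. x \<noteq> y \<and> x \<noteq> z \<and> y \<noteq> z
            \<and> critical_point (dickson n a) x \<and> critical_point (dickson n a) y \<and> critical_point (dickson n a) z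
            \<and> critical_value (dickson n a) x = critical_value (dickson n a) y
            \<and> critical_value (dickson n a) y = critical_value (dickson n a) z))"
proof (cases "n \<ge> 4")
  case True
  define D where "D = dickson n (to_ac a)"
  have crit: "critical_point (dickson n a) z \<longleftrightarrow> poly (pderiv D) z = 0" for z
    by (simp add: critical_point_def map_poly_to_ac_dickson D_def)
  have val: "critical_value (dickson n a) z = poly D z" for z
    by (simp add: critical_value_def map_poly_to_ac_dickson D_def)
  have "to_ac a \<noteq> 0" "n \<ge> 2" using assms True by simp_all
  then obtain w where w: "n - 1 \<le> 2 * card {z. poly (pderiv D) z = 0 \<and> poly D z = w}"
    unfolding D_def by (rule dickson_large_critical_fibre)
  define F where "F = {z. poly (pderiv D) z = 0 \<and> poly D z = w}"
  have "2 \<le> card F" using w True unfolding F_def by linarith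
  then obtain x y where "x \<in> F" "y \<in> F" "x \<noteq> y" by (rule obtain_two_distinct)
  moreover have "\<exists>x y z. x \<noteq> y \<and> x \<noteq> z \<and> y \<noteq> z \<and> x \<in> F \<and> y \<in> F \<and> z \<in> F" if "n \<ge> 6"
  proof -
    have "3 \<le> card F" using w that unfolding F_def by linarith
    thus ?thesis by (rule obtain_three_distinct) blast
  qed
  ultimately show ?thesis unfolding crit val F_def by (smt (verit) mem_Collect_eq)
qed simp

end
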